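(* Let $!\Gamma$ be a finite multiset of ILL formulae each of the form $!\gamma$, and $\varphi$ an ILL formula. If $!\Gamma\Vdash\varphi$ (i.e. $!\Gamma\Vdash^{\varnothing}_{\mathcal{B}}\varphi$ for every base $\mathcal{B}$), then $!\Gamma\Vdash\,!\varphi$.
   Context: Fix a set $\mathbb{A}$ of propositional atoms. ILL formulae: $\phi ::= p\in\mathbb{A} \mid \top \mid 0 \mid 1 \mid \phi\multimap\phi \mid \phi\otimes\phi \mid \phi\,\&\,\phi \mid \phi\oplus\phi \mid\ !\phi$. All multisets are finite; "$\Gamma,\Delta$" denotes multiset union. Atomic rules and bases: an atomic sequent is $P\Rightarrow p$ with $P$ a multiset of atoms, $p$ an atom. An atomic box is a multiset of atomic sequents. An atomic rule is a triple $\langle\mathbf{A},\mathbf{S},p\rangle$ with $\mathbf{A}$ a multiset of atomic boxes, $\mathbf{S}$ an atomic box, $p$ an atom. A base is a set of atomic rules. An atom $p$ is persistent in $\mathcal{B}$ if some $\langle\varnothing,\mathbf{S},p\rangle\in\mathcal{B}$ has $\mathbf{S}\neq\varnothing$. Derivability $\vdash_{\mathcal{B}}$: (Ref) $p\vdash_{\mathcal{B}}p$; (App) if $\langle\mathbf{A},\mathbf{S},p\rangle\in\mathcal{B}$ with $\mathbf{A}=\{\mathbf{T}_1,\dots,\mathbf{T}_m\}$, and there are atomic multisets $C_1,\dots,C_n$ ($n\ge m$) and a multiset $D=\{d_{m+1},\dots,d_n\}$ of atoms persistent in $\mathcal{B}$ such that $C_i,Q\vdash_{\mathcal{B}}q$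 for every $i\le m$ and every $Q\Rightarrow q\in\mathbf{T}_i$, $C_j\vdash_{\mathcal{B}}d_j$ for every $m<j\le n$, and $D,U\vdash_{\mathcal{B}}v$ for every $U\Rightarrow v\in\mathbf{S}$, then $C_1,\dots,C_n\vdash_{\mathcal{B}}p$. Support $\Vdash^L_{\mathcal{B}}$ (base $\mathcal{B}$, atomic multiset $L$), by induction on formulae: $\Vdash^L_{\mathcal{B}}p$ iff $L\vdash_{\mathcal{B}}p$; $\Vdash^L_{\mathcal{B}}\varphi\multimap\psi$ iff $\varphi\Vdash^L_{\mathcal{B}}\psi$; $\Vdash^L_{\mathcal{B}}\varphi\otimes\psi$ iff for all $\mathcal{C}\supseteq\mathcal{B}$, atomic $K$, atoms $p$: if $\varphi,\psi\Vdash^K_{\mathcal{C}}p$ then $\Vdash^{L,K}_{\mathcal{C}}p$; $\Vdash^L_{\mathcal{B}}1$ iff for all $\mathcal{C}\supseteq\mathcal{B}$, $K$, $p$: if $\Vdash^K_{\mathcal{C}}p$ then $\Vdash^{L,K}_{\mathcal{C}}p$; $\Vdash^L_{\mathcal{B}}\varphi\&\psi$ iff $\Vdash^L_{\mathcal{B}}\varphi$ and $\Vdash^L_{\mathcal{B}}\psi$; $\Vdash^L_{\mathcal{B}}\varphi\oplus\psi$ iff for all $\mathcal{C}\supseteq\mathcal{B}$, $K$, $p$: if $\varphi\Vdash^K_{\mathcal{C}}p$ and $\psi\Vdash^K_{\mathcal{C}}p$ then $\Vdash^{L,K}_{\mathcal{C}}p$; $\Vdash^L_{\mathcal{B}}0$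 iff $\Vdash^{L,K}_{\mathcal{B}}p$ for all atoms $p$ and atomic $K$; $\Vdash^L_{\mathcal{B}}\top$ always; $\Vdash^L_{\mathcal{B}}!\varphi$ iff for all $\mathcal{C}\supseteq\mathcal{B}$, $K$, $p$: if (for all $\mathcal{D}\supseteq\mathcal{C}$, $\Vdash^{\varnothing}_{\mathcal{D}}\varphi$ implies $\Vdash^K_{\mathcal{D}}p$) then $\Vdash^{L,K}_{\mathcal{C}}p$. For nonempty multisets: $\Vdash^L_{\mathcal{B}}\Gamma,\Delta$ iff $L=K,M$ with $\Vdash^K_{\mathcal{B}}\Gamma$ and $\Vdash^M_{\mathcal{B}}\Delta$. For a nonempty antecedent written $!\Delta,\Theta$, where $!\Delta$ collects the formulae with top-level connective $!$ (with $\Delta$ the formulae under those $!$) and $\Theta$ contains none: $!\Delta,\Theta\Vdash^L_{\mathcal{B}}\varphi$ iff for all $\mathcal{C}\supseteq\mathcal{B}$ and atomic $K$, if $\Vdash^{\varnothing}_{\mathcal{C}}\delta$ for every $\delta\in\Delta$ and $\Vdash^K_{\mathcal{C}}\Theta$ then $\Vdash^{L,K}_{\mathcal{C}}\varphi$ (when $\Theta$ is empty, $K$ is empty). An empty antecedent: $\varnothing\Vdash^L_{\mathcal{B}}\varphi$ means $\Vdash^L_{\mathcal{B}}\varphi$. A sequent $(\Gamma:\varphi)$ is valid, written $\Gamma\Vdash\varphi$, iff $\Gamma\Vdash^{\varnothing}_{\mathcal{B}}\varphi$ for all bases $\mathcal{B}$. *)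

theory Defs
  imports Main "HOL-Library.Multiset"
begin

datatype 'a form =
    Atom 'a
  | Top
  | Zero
  | One
  | Lolli "'a form" "'a form"
  | Tensor "'a form" "'a form"
  | With "'a form" "'a form"
  | Plus "'a form" "'a form"
  | Bang "'a form"

type_synonym 'a aseq = "'a multiset \<times> 'a"
type_synonym 'a abox = "'a aseq multiset"
type_synonym 'a arule = "'a abox multiset \<times> 'a abox \<times> 'a"
type_synonym 'a base = "'a arule set"

definition persistent :: "'a base \<Rightarrow> 'a \<Rightarrow> bool" where
  "persistent B p \<longleftrightarrow> (\<exists>S. ({#}, S, p) \<in> B \<and> S \<noteq> {#})"

text \<open>In (App), the premise boxes T_1..T_m of the rule are
  listed as Ts (any enumeration of the multiset A), with the multisets C_1..C_m as Cs;
  the persistent atoms d_{m+1}..d_n are ds with the multisets C_{m+1}..C_n as Es.\<close>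
inductive deriv :: "'a base \<Rightarrow> 'a multiset \<Rightarrow> 'a \<Rightarrow> bool" for B where
  Ref: "deriv B {#p#} p"
| App: "\<lbrakk> (A, S, p) \<in> B; mset Ts = A; length Cs = length Ts; length Es = length ds;
          \<forall>i<length Ts. \<forall>Q q. (Q, q) \<in># Ts ! i \<longrightarrow> deriv B (Cs ! i + Q) q;
          \<forall>j<length ds. persistent B (ds ! j) \<and> deriv B (Es ! j) (ds ! j);
          \<forall>U v. (U, v) \<in># S \<longrightarrow> deriv B (mset ds + U) v \<rbrakk>
        \<Longrightarrow> deriv B (sum_list Cs + sum_list Es) p"

text \<open>Sequent support with
  one- or two-formula antecedents (as used in the clauses for -o, tensor, plus) is
  unfolded according to whether each antecedent formula has top-level connective !.\<close>
fun sup :: "'a base \<Rightarrow> 'a multiset \<Rightarrow> 'a form \<Rightarrow> bool" where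
  "sup B L (Atom p) = deriv B L p"
| "sup B L (Lolli \<phi> \<psi>) =
     (case \<phi> of
        Bang d \<Rightarrow> (\<forall>C. B \<subseteq> C \<longrightarrow> sup C {#} d \<longrightarrow> sup C L \<psi>)
      | _ \<Rightarrow> (\<forall>C K. B \<subseteq> C \<longrightarrow> sup C K \<phi> \<longrightarrow> sup C (L + K) \<psi>))"
| "sup B L (Tensor \<phi> \<psi>) =
     (\<forall>C K p. B \<subseteq> C \<longrightarrow>
        (case \<phi> of
           Bang a \<Rightarrow> (case \<psi> of
               Bang b \<Rightarrow> (\<forall>D. C \<subseteq> D \<longrightarrow> sup D {#} a \<longrightarrow> sup D {#} b \<longrightarrow> deriv D K p)
             | _ \<Rightarrow> (\<forall>D K'. C \<subseteq> D \<longrightarrow> sup D {#} a \<longrightarrow> sup D K' \<psi> \<longrightarrow> deriv D (K + K') p))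
         | _ \<Rightarrow> (case \<psi> of
               Bang b \<Rightarrow> (\<forall>D K'. C \<subseteq> D \<longrightarrow> sup D {#} b \<longrightarrow> sup D K' \<phi> \<longrightarrow> deriv D (K + K') p)
             | _ \<Rightarrow> (\<forall>D K1 K2. C \<subseteq> D \<longrightarrow> sup D K1 \<phi> \<longrightarrow> sup D K2 \<psi> \<longrightarrow> deriv D (K + (K1 + K2)) p)))
        \<longrightarrow> deriv C (L + K) p)"
| "sup B L One = (\<forall>C K p. B \<subseteq> C \<longrightarrow> deriv C K p \<longrightarrow> deriv C (L + K) p)"
| "sup B L (With \<phi> \<psi>) = (sup B L \<phi> \<and> sup B L \<psi>)"
| "sup B L (Plus \<phi> \<psi>) =
     (\<forall>C K p. B \<subseteq> C \<longrightarrow>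
        (case \<phi> of
           Bang a \<Rightarrow> (\<forall>D. C \<subseteq> D \<longrightarrow> sup D {#} a \<longrightarrow> deriv D K p)
         | _ \<Rightarrow> (\<forall>D K'. C \<subseteq> D \<longrightarrow> sup D K' \<phi> \<longrightarrow> deriv D (K + K') p)) \<longrightarrow>
        (case \<psi> of
           Bang b \<Rightarrow> (\<forall>D. C \<subseteq> D \<longrightarrow> sup D {#} b \<longrightarrow> deriv D K p)
         | _ \<Rightarrow> (\<forall>D K'. C \<subseteq> D \<longrightarrow> sup D K' \<psi> \<longrightarrow> deriv D (K + K') p)) \<longrightarrow>
        deriv C (L + K) p)"
| "sup B L Zero = (\<forall>p K. deriv B (L + K) p)"
| "sup B L Top = True"
| "sup B L (Bang \<phi>) =
     (\<forall>C K p. B \<subseteq> C \<longrightarrow> (\<forall>D. C \<subseteq> D \<longrightarrow> sup D {#} \<phi> \<longrightarrow> deriv D K p) \<longrightarrow> deriv C (L + K) p)"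

definition sup_ctx :: "'a base \<Rightarrow> 'a multiset \<Rightarrow> 'a form multiset \<Rightarrow> bool" where
  "sup_ctx B L \<Theta> \<longleftrightarrow> (\<exists>xs Ls. mset xs = \<Theta> \<and> length Ls = length xs \<and> L = sum_list Ls \<and>
       (\<forall>i<length xs. sup B (Ls ! i) (xs ! i)))"

definition is_bang :: "'a form \<Rightarrow> bool" where
  "is_bang \<phi> \<longleftrightarrow> (\<exists>d. \<phi> = Bang d)"

fun unbang :: "'a form \<Rightarrow> 'a form" where
  "unbang (Bang d) = d"
| "unbang \<phi> = \<phi>"

definition seq_sup :: "'a base \<Rightarrow> 'a multiset \<Rightarrow> 'a form multiset \<Rightarrow> 'a form \<Rightarrow> bool" where
  "seq_sup B L \<Gamma> \<phi> \<longleftrightarrow>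
     (if \<Gamma> = {#} then sup B L \<phi>
      else (\<forall>C K. B \<subseteq> C \<longrightarrow>
              (\<forall>\<delta> \<in># image_mset unbang (filter_mset is_bang \<Gamma>). sup C {#} \<delta>) \<longrightarrow>
              sup_ctx C K (filter_mset (\<lambda>\<theta>. \<not> is_bang \<theta>) \<Gamma>) \<longrightarrow>
              sup C (L + K) \<phi>))"

definition valid :: "'a form multiset \<Rightarrow> 'a form \<Rightarrow> bool" where
  "valid \<Gamma> \<phi> \<longleftrightarrow> (\<forall>B. seq_sup B {#} \<Gamma> \<phi>)"

end

theory Submission
  imports Defs
begin

text \<open>
  Support of a formula is preserved when the base is extended. Hence an antecedent
  consisting of !-formulae only is persistent: validity of !\<Gamma> |- \<phi> says that \<phi> is
  supported with no atomic resources at every base supporting all of \<Gamma>, and if a base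
  B supports \<Gamma>, so does every extension of B. Thus \<phi> is supported with no resources
  at every extension of B, which (taking D = C in the clause for !) is all that
  support of !\<phi> with no resources at B requires.
\<close>

lemma deriv_mono:
  assumes "deriv B L p" and "B \<subseteq> C"
  shows "deriv C L p"
  using assms
proof (induction rule: deriv.induct)
  case (Ref p)
  show ?case by (rule deriv.Ref)
next
  case (App A S p Ts Cs Es ds)
  have "\<forall>j<length ds. persistent C (ds ! j) \<and> deriv C (Es ! j) (ds ! j)"
    using App unfolding persistent_def by blast
  with App show ?case by (intro deriv.App[of A S p C Ts Cs Es ds]) auto
qed

lemma sup_mono:
  assumes "sup B L \<phi>" and "B \<subseteq> C"
  shows "sup C L \<phi>"
  using assms
proof (induction \<phi> arbitrary: L)
  case (Atom x)
  then show ?case by (auto intro: deriv_mono)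
next
  case Zero
  then show ?case by (auto intro: deriv_mono)
next
  case (Lolli \<phi>1 \<phi>2)
  then show ?case by (cases \<phi>1) (auto dest: subset_trans)
next
  case (Tensor \<phi>1 \<phi>2)
  then show ?case by (simp only: sup.simps) (meson subset_trans)
next
  case (Plus \<phi>1 \<phi>2)
  then show ?case by (simp only: sup.simps) (meson subset_trans)
next
  case (Bang \<phi>)
  then show ?case by (simp only: sup.simps) (meson subset_trans)
qed auto

lemma sup_Bang_if_sup_extensions:
  assumes "\<And>D. B \<subseteq> D \<Longrightarrow> sup D {#} \<phi>"
  shows "sup B {#} (Bang \<phi>)"
  using assms by auto

lemma sup_ctx_empty_iff: "sup_ctx B K {#} \<longleftrightarrow> K = {#}"
  unfolding sup_ctx_def by auto

lemma filter_is_bang_image_Bang: "filter_mset is_bang (image_mset Bang \<Gamma>) = image_mset Bang \<Gamma>"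
  by (induction \<Gamma>) (auto simp: is_bang_def)

lemma filter_not_is_bang_image_Bang: "filter_mset (\<lambda>\<theta>. \<not> is_bang \<theta>) (image_mset Bang \<Gamma>) = {#}"
  by (induction \<Gamma>) (auto simp: is_bang_def)

lemma image_unbang_image_Bang: "image_mset unbang (image_mset Bang \<Gamma>) = \<Gamma>"
  by (induction \<Gamma>) auto

lemma seq_sup_image_Bang:
  assumes "\<Gamma> \<noteq> {#}"
  shows "seq_sup B L (image_mset Bang \<Gamma>) \<phi> \<longleftrightarrow>
           (\<forall>C. B \<subseteq> C \<longrightarrow> (\<forall>\<gamma>\<in>#\<Gamma>. sup C {#} \<gamma>) \<longrightarrow> sup C L \<phi>)"
  using assms
  by (simp add: seq_sup_def filter_is_bang_image_Bang filter_not_is_bang_image_Bang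
      image_unbang_image_Bang sup_ctx_empty_iff)

lemma valid_image_Bang_iff:
  "valid (image_mset Bang \<Gamma>) \<phi> \<longleftrightarrow> (\<forall>B. (\<forall>\<gamma>\<in>#\<Gamma>. sup B {#} \<gamma>) \<longrightarrow> sup B {#} \<phi>)"
proof (cases "\<Gamma> = {#}")
  case True
  then show ?thesis by (simp add: valid_def seq_sup_def)
next
  case False
  then show ?thesis by (auto simp: valid_def seq_sup_image_Bang)
qed

theorem corollary2:
  fixes \<Gamma> :: "'a form multiset" and \<phi> :: "'a form"
  assumes "valid (image_mset Bang \<Gamma>) \<phi>"
  shows "valid (image_mset Bang \<Gamma>) (Bang \<phi>)"
  unfolding valid_image_Bang_iff
proof (intro allI impI)
  fix B
  assume "\<forall>\<gamma>\<in>#\<Gamma>. sup B {#} \<gamma>"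
  then have "\<forall>\<gamma>\<in>#\<Gamma>. sup D {#} \<gamma>" if "B \<subseteq> D" for D
    using that by (blast intro: sup_mono)
  with assms have "sup D {#} \<phi>" if "B \<subseteq> D" for D
    using that by (simp add: valid_image_Bang_iff)
  then show "sup B {#} (Bang \<phi>)"
    by (rule sup_Bang_if_sup_extensions)
qed

end
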